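(* Let $q$ and $r$ be integers with $4\le q<r+3$. Then (a) $F_v(2_r;q-1)\ge F_v(2_r;q)+1$; (b) if $F_v(2_r;q)+1\ge R(q-1,3)$, then $F_v(2_r;q-1)\ge F_v(2_r;q)+2$.
   Context: All graphs are finite, simple and undirected. $\mathrm{cl}(G)$ is the clique number of $G$. $G\overset{v}{\to}(2_r)$ means that in every partition of $V(G)$ into $r$ pairwise disjoint parts some part contains an edge (equivalently $\chi(G)\ge r+1$). $H_v(2_r;q)$ is the set of graphs $G$ with $G\overset{v}{\to}(2_r)$ and $\mathrm{cl}(G)<q$; $F_v(2_r;q)=\min\{|V(G)|:G\in H_v(2_r;q)\}$. The Ramsey number $R(p,3)$ is the least $n$ such that every graph on at least $n$ vertices has a $p$-clique or an independent set of size $3$. *)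

theory Defs
  imports Main
begin

text \<open>A finite simple graph on natural-number vertices: vertex set V, edges are
  2-element subsets of V. Every finite simple graph is isomorphic to one of these.\<close>
definition sgraph :: "nat set \<Rightarrow> nat set set \<Rightarrow> bool" where
  "sgraph V E \<longleftrightarrow> finite V \<and> E \<subseteq> {{x, y} | x y. x \<in> V \<and> y \<in> V \<and> x \<noteq> y}"

definition is_clique :: "nat set \<Rightarrow> nat set set \<Rightarrow> nat set \<Rightarrow> bool" where
  "is_clique V E K \<longleftrightarrow> K \<subseteq> V \<and> (\<forall>x\<in>K. \<forall>y\<in>K. x \<noteq> y \<longrightarrow> {x, y} \<in> E)"

definition is_indep :: "nat set \<Rightarrow> nat set set \<Rightarrow> nat set \<Rightarrow> bool" where
  "is_indep V E I \<longleftrightarrow> I \<subseteq> V \<and> (\<forall>x\<in>I. \<forall>y\<in>I. x \<noteq> y \<longrightarrow> {x, y} \<notin> E)"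

definition clique_number :: "nat set \<Rightarrow> nat set set \<Rightarrow> nat" where
  "clique_number V E = Max {card K | K. is_clique V E K}"

text \<open>G \<rightarrow>v (2_r): every partition of V into r parts (a map V \<rightarrow> {0..<r})
  has a part containing an edge.\<close>
definition vertex_arrows :: "nat set \<Rightarrow> nat set set \<Rightarrow> nat \<Rightarrow> bool" where
  "vertex_arrows V E r \<longleftrightarrow>
     (\<forall>f :: nat \<Rightarrow> nat. (\<forall>v\<in>V. f v < r) \<longrightarrow>
        (\<exists>x\<in>V. \<exists>y\<in>V. {x, y} \<in> E \<and> f x = f y))"

definition Hv :: "nat \<Rightarrow> nat \<Rightarrow> (nat set \<times> nat set set) set" where
  "Hv r q = {(V, E). sgraph V E \<and> vertex_arrows V E r \<and> clique_number V E < q}"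

definition Fv :: "nat \<Rightarrow> nat \<Rightarrow> nat" where
  "Fv r q = (LEAST n. \<exists>(V, E) \<in> Hv r q. card V = n)"

definition ramsey3 :: "nat \<Rightarrow> nat" where
  "ramsey3 p = (LEAST n. \<forall>V E. sgraph V E \<and> n \<le> card V \<longrightarrow>
      (\<exists>K. is_clique V E K \<and> card K = p) \<or> (\<exists>I. is_indep V E I \<and> card I = 3))"

end

theory Submission
  imports Defs "HOL-Library.Nat_Bijection" "HOL-Library.Ramsey"
begin

text \<open>Identifying the vertices of an independent set S with a single vertex a keeps the
  graph simple, keeps it non-r-colourable (a colouring of the quotient pulls back along
  the identification), and raises the clique number by at most one, since a clique of
  the quotient minus a is a clique of the original graph; it removes card S - 1 vertices.
  Apply this to a smallest graph in H_v(2_r; q - 1). It is not complete, because a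
  non-r-colourable graph has more than r \<ge> q - 2 vertices, so S can be a non-edge. If
  it has at least R(q - 1, 3) vertices it contains no (q - 1)-clique, so S can be an
  independent triple. That H_v(2_r; q - 1) is nonempty is witnessed by the shift graph
  on the pairs i < j < 2^r + 1, which is triangle-free and not r-colourable.\<close>

lemma sgraph_finite: "sgraph V E \<Longrightarrow> finite V"
  by (simp add: sgraph_def)

lemma sgraph_edgeE:
  assumes "sgraph V E" "e \<in> E"
  obtains x y where "e = {x, y}" "x \<in> V" "y \<in> V" "x \<noteq> y"
  using assms unfolding sgraph_def by blast

lemma sgraph_no_loop: "sgraph V E \<Longrightarrow> {x} \<notin> E"
  unfolding sgraph_def by (auto simp: doubleton_eq_iff)

lemma clique_number_less_iff:
  assumes "sgraph V E"
  shows "clique_number V E < q \<longleftrightarrow> (\<forall>K. is_clique V E K \<longrightarrow> card K < q)"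
proof -
  let ?sizes = "{card K | K. is_clique V E K}"
  have "?sizes \<subseteq> card ` Pow V"
    unfolding is_clique_def by blast
  then have "finite ?sizes"
    by (rule finite_subset) (simp add: sgraph_finite[OF assms])
  moreover have "is_clique V E {}"
    by (simp add: is_clique_def)
  then have "?sizes \<noteq> {}"
    by blast
  ultimately show ?thesis
    unfolding clique_number_def using Max_less_iff by blast
qed

lemma mem_Hv_iff:
  "(V, E) \<in> Hv r q \<longleftrightarrow>
     sgraph V E \<and> vertex_arrows V E r \<and> (\<forall>K. is_clique V E K \<longrightarrow> card K < q)"
proof -
  have "(V, E) \<in> Hv r q \<longleftrightarrow> sgraph V E \<and> vertex_arrows V E r \<and> clique_number V E < q"
    by (simp add: Hv_def)
  then show ?thesis
    using clique_number_less_iff[of V E q] by blast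
qed

lemma Fv_le: "(V, E) \<in> Hv r q \<Longrightarrow> Fv r q \<le> card V"
  unfolding Fv_def by (rule Least_le) blast

lemma Fv_attained:
  assumes "Hv r q \<noteq> {}"
  obtains V E where "(V, E) \<in> Hv r q" "card V = Fv r q"
proof -
  have "\<exists>(V, E) \<in> Hv r q. card V = Fv r q"
    unfolding Fv_def by (rule LeastI_ex) (use assms in auto)
  then show ?thesis using that by blast
qed

lemma vertex_arrows_imp_less_card:
  assumes "sgraph V E" "vertex_arrows V E r"
  shows "r < card V"
proof (rule ccontr)
  assume "\<not> r < card V"
  obtain h where h: "bij_betw h V {0..<card V}"
    using ex_bij_betw_finite_nat[OF sgraph_finite[OF assms(1)]] by blast
  with \<open>\<not> r < card V\<close> have "\<forall>v\<in>V. h v < r"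
    using bij_betwE by fastforce
  then obtain x y where "x \<in> V" "y \<in> V" "{x, y} \<in> E" "h x = h y"
    using assms(2) unfolding vertex_arrows_def by blast
  with h have "{x} \<in> E"
    by (metis bij_betw_imp_inj_on inj_onD insert_absorb2)
  with assms(1) show False
    using sgraph_no_loop by blast
qed

definition collapse :: "nat set \<Rightarrow> nat \<Rightarrow> nat \<Rightarrow> nat" where
  "collapse S a x = (if x \<in> S then a else x)"

lemma collapse_mem:
  "x \<in> V \<Longrightarrow> S \<subseteq> V \<Longrightarrow> a \<in> S \<Longrightarrow> collapse S a x \<in> V - (S - {a})"
  by (auto simp: collapse_def)

lemma sgraph_collapse:
  assumes G: "sgraph V E" and S: "is_indep V E S" "a \<in> S"
  shows "sgraph (V - (S - {a})) (image (collapse S a) ` E)"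
  unfolding sgraph_def
proof (intro conjI subsetI)
  show "finite (V - (S - {a}))"
    using sgraph_finite[OF G] by simp
  fix e' assume "e' \<in> image (collapse S a) ` E"
  then obtain x y where "e' = {collapse S a x, collapse S a y}" "{x, y} \<in> E"
    "x \<in> V" "y \<in> V" "x \<noteq> y"
    using G by (auto elim: sgraph_edgeE)
  moreover from calculation S have "collapse S a x \<noteq> collapse S a y"
    by (auto simp: collapse_def is_indep_def)
  moreover from S have "S \<subseteq> V"
    by (simp add: is_indep_def)
  ultimately show "e' \<in> {{x, y} |x y. x \<in> V - (S - {a}) \<and> y \<in> V - (S - {a}) \<and> x \<noteq> y}"
    using S(2) collapse_mem by blast
qed

lemma vertex_arrows_collapse:
  assumes "vertex_arrows V E r" "S \<subseteq> V" "a \<in> S"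
  shows "vertex_arrows (V - (S - {a})) (image (collapse S a) ` E) r"
  unfolding vertex_arrows_def
proof (intro allI impI)
  fix f :: "nat \<Rightarrow> nat"
  assume "\<forall>v \<in> V - (S - {a}). f v < r"
  then have "\<forall>v\<in>V. (f \<circ> collapse S a) v < r"
    using assms(2,3) collapse_mem by fastforce
  then obtain x y where "x \<in> V" "y \<in> V" "{x, y} \<in> E" "f (collapse S a x) = f (collapse S a y)"
    using assms(1)[unfolded vertex_arrows_def, rule_format, of "f \<circ> collapse S a"] by auto
  moreover from calculation have "{collapse S a x, collapse S a y} \<in> image (collapse S a) ` E"
    by (intro image_eqI[of _ _ "{x, y}"]) simp_all
  ultimately show "\<exists>x \<in> V - (S - {a}). \<exists>y \<in> V - (S - {a}). {x, y} \<in> image (collapse S a) ` E \<and> f x = f y"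
    using assms(2,3) collapse_mem by blast
qed

lemma is_clique_collapse:
  assumes G: "sgraph V E" and K: "is_clique (V - (S - {a})) (image (collapse S a) ` E) K"
  shows "is_clique V E (K - {a})"
  unfolding is_clique_def
proof (intro conjI ballI impI)
  show "K - {a} \<subseteq> V"
    using K by (auto simp: is_clique_def)
  fix x y assume x: "x \<in> K - {a}" and y: "y \<in> K - {a}" and "x \<noteq> y"
  with K have "x \<notin> S" "y \<notin> S" "{x, y} \<in> image (collapse S a) ` E"
    by (auto simp: is_clique_def)
  then obtain x' y' where e: "{x', y'} \<in> E" "{x, y} = {collapse S a x', collapse S a y'}"
    using G by (auto elim: sgraph_edgeE)
  with x y have "x' \<notin> S" "y' \<notin> S"
    by (auto simp: collapse_def doubleton_eq_iff split: if_splits)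
  with e show "{x, y} \<in> E"
    by (simp add: collapse_def)
qed

lemma card_collapse:
  assumes "finite V" "S \<subseteq> V" "a \<in> S"
  shows "card (V - (S - {a})) + card S = card V + 1"
proof -
  have "card (V - (S - {a})) = card V - card (S - {a})"
    using assms by (intro card_Diff_subset) (auto intro: finite_subset)
  moreover have "card S = card (S - {a}) + 1"
    using assms card_Suc_Diff1[of S a] finite_subset by fastforce
  moreover have "card (S - {a}) \<le> card V"
    using assms by (intro card_mono) auto
  ultimately show ?thesis by linarith
qed

lemma Fv_Suc_le_collapse:
  assumes "(V, E) \<in> Hv r q" "is_indep V E S" "S \<noteq> {}"
  shows "Fv r (Suc q) + card S \<le> card V + 1"
proof -
  obtain a where "a \<in> S"
    using assms(3) by blast
  from assms have G: "sgraph V E" and "vertex_arrows V E r" and "S \<subseteq> V"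
    and cl: "\<forall>K. is_clique V E K \<longrightarrow> card K < q"
    by (auto simp: mem_Hv_iff is_indep_def)
  have "card K < Suc q" if "is_clique (V - (S - {a})) (image (collapse S a) ` E) K" for K
  proof -
    have "card (K - {a}) < q"
      using cl is_clique_collapse[OF G that] by blast
    moreover have "card K \<le> card (K - {a}) + 1"
      by (auto simp: card_Diff_singleton_if)
    ultimately show ?thesis
      by linarith
  qed
  with \<open>a \<in> S\<close> G \<open>vertex_arrows V E r\<close> \<open>S \<subseteq> V\<close> assms(2)
  have "(V - (S - {a}), image (collapse S a) ` E) \<in> Hv r (Suc q)"
    by (simp add: mem_Hv_iff sgraph_collapse vertex_arrows_collapse)
  then have "Fv r (Suc q) \<le> card (V - (S - {a}))"
    by (rule Fv_le)
  with card_collapse[OF sgraph_finite[OF G] \<open>S \<subseteq> V\<close> \<open>a \<in> S\<close>] show ?thesis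
    by linarith
qed

lemma ramsey3_le_card_imp_clique_or_indep:
  assumes "sgraph V E" "ramsey3 p \<le> card V"
  shows "(\<exists>K. is_clique V E K \<and> card K = p) \<or> (\<exists>I. is_indep V E I \<and> card I = 3)"
proof -
  obtain n where n: "\<forall>(V :: nat set) (E :: nat set set). finite V \<and> n \<le> card V \<longrightarrow>
      (\<exists>R \<subseteq> V. card R = p \<and> clique R E \<or> card R = 3 \<and> indep R E)"
    using ramsey2 by blast
  have "(\<exists>K. is_clique V E K \<and> card K = p) \<or> (\<exists>I. is_indep V E I \<and> card I = 3)"
    if G: "sgraph V E" and large: "n \<le> card V" for V E
  proof -
    obtain R where "R \<subseteq> V" "card R = p \<and> clique R E \<or> card R = 3 \<and> indep R E"
      using n sgraph_finite[OF G] large by blast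
    then show ?thesis
      unfolding clique_def indep_def is_clique_def is_indep_def by blast
  qed
  then have "\<exists>n. \<forall>V E. sgraph V E \<and> n \<le> card V \<longrightarrow>
      (\<exists>K. is_clique V E K \<and> card K = p) \<or> (\<exists>I. is_indep V E I \<and> card I = 3)"
    by blast
  from LeastI_ex[OF this] assms show ?thesis
    unfolding ramsey3_def by blast
qed

definition shift_vertices :: "nat \<Rightarrow> nat set" where
  "shift_vertices N = prod_encode ` {(i, j). i < j \<and> j < N}"

definition shift_edges :: "nat \<Rightarrow> nat set set" where
  "shift_edges N = {{prod_encode (i, j), prod_encode (j, k)} | i j k. i < j \<and> j < k \<and> k < N}"

lemma sgraph_shift: "sgraph (shift_vertices N) (shift_edges N)"
  unfolding sgraph_def
proof (intro conjI subsetI)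
  have "{(i, j). i < j \<and> j < N} \<subseteq> {..<N} \<times> {..<N}"
    by auto
  then have "finite {(i, j). i < j \<and> j < N}"
    using finite_subset by blast
  then show "finite (shift_vertices N)"
    unfolding shift_vertices_def by simp
  fix e assume "e \<in> shift_edges N"
  then obtain i j k where "e = {prod_encode (i, j), prod_encode (j, k)}" "i < j" "j < k" "k < N"
    unfolding shift_edges_def by blast
  then show "e \<in> {{x, y} |x y. x \<in> shift_vertices N \<and> y \<in> shift_vertices N \<and> x \<noteq> y}"
    unfolding shift_vertices_def by fastforce
qed

lemma shift_edges_adjacent:
  assumes "{prod_encode (a, b), prod_encode (c, d)} \<in> shift_edges N"
  shows "b = c \<or> d = a"
proof -
  obtain i j k where "{prod_encode (a, b), prod_encode (c, d)} = {prod_encode (i, j), prod_encode (j, k)}"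
    using assms unfolding shift_edges_def by blast
  then show ?thesis
    by (auto simp: doubleton_eq_iff)
qed

lemma shift_clique_card_less_3:
  assumes K: "is_clique (shift_vertices N) (shift_edges N) K"
  shows "card K < 3"
proof (rule ccontr)
  assume "\<not> card K < 3"
  then obtain K3 where "K3 \<subseteq> K" "card K3 = 3"
    using obtain_subset_with_card_n[of 3 K] by auto
  then obtain x y z where xyz: "K3 = {x, y, z}" "x \<noteq> y" "y \<noteq> z" "x \<noteq> z"
    by (auto simp: card_3_iff)
  with K \<open>K3 \<subseteq> K\<close> have e: "{x, y} \<in> shift_edges N" "{x, z} \<in> shift_edges N" "{y, z} \<in> shift_edges N"
    and "x \<in> shift_vertices N" "y \<in> shift_vertices N" "z \<in> shift_vertices N"
    unfolding is_clique_def by auto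
  then obtain a1 b1 a2 b2 a3 b3 where p: "x = prod_encode (a1, b1)" "a1 < b1"
    "y = prod_encode (a2, b2)" "a2 < b2" "z = prod_encode (a3, b3)" "a3 < b3"
    unfolding shift_vertices_def by blast
  have "b1 = a2 \<or> b2 = a1" "b1 = a3 \<or> b3 = a1" "b2 = a3 \<or> b3 = a2"
    using e p shift_edges_adjacent by simp_all
  with xyz p show False
    by auto
qed

text \<open>In an r-colouring without monochromatic edge, the colour sets
  A i = {colour of (i, j) | j > i} are pairwise distinct: if A i = A j with i < j,
  the colour of (i, j) lies in A j and so is also the colour of some neighbour (j, k).\<close>
lemma vertex_arrows_shift:
  assumes "2 ^ r < N"
  shows "vertex_arrows (shift_vertices N) (shift_edges N) r"
  unfolding vertex_arrows_def
proof (intro allI impI, rule ccontr)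
  fix f :: "nat \<Rightarrow> nat"
  assume f: "\<forall>v\<in>shift_vertices N. f v < r"
    and proper: "\<not> (\<exists>x\<in>shift_vertices N. \<exists>y\<in>shift_vertices N. {x, y} \<in> shift_edges N \<and> f x = f y)"
  define A where "A i = {f (prod_encode (i, j)) | j. i < j \<and> j < N}" for i
  have "A i \<noteq> A j" if "i < j" "j < N" for i j
  proof
    assume "A i = A j"
    moreover have "f (prod_encode (i, j)) \<in> A i"
      using that unfolding A_def by blast
    ultimately obtain k where k: "j < k" "k < N" "f (prod_encode (i, j)) = f (prod_encode (j, k))"
      unfolding A_def by auto
    with that have "{prod_encode (i, j), prod_encode (j, k)} \<in> shift_edges N"
      "prod_encode (i, j) \<in> shift_vertices N" "prod_encode (j, k) \<in> shift_vertices N"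
      unfolding shift_edges_def shift_vertices_def by auto
    with proper k(3) show False
      by blast
  qed
  then have "inj_on A {..<N}"
    by (metis inj_onI lessThan_iff linorder_neqE_nat)
  moreover have "A ` {..<N} \<subseteq> Pow {..<r}"
    using f unfolding A_def shift_vertices_def by auto
  ultimately have "card {..<N} \<le> card (Pow {..<r})"
    by (intro card_inj_on_le) auto
  with assms show False
    by (simp add: card_Pow)
qed

lemma Hv_nonempty:
  assumes "3 \<le> q"
  shows "Hv r q \<noteq> {}"
proof -
  have "(shift_vertices (2 ^ r + 1), shift_edges (2 ^ r + 1)) \<in> Hv r q"
    using assms sgraph_shift vertex_arrows_shift shift_clique_card_less_3
    by (fastforce simp: mem_Hv_iff)
  then show ?thesis
    by blast
qed

lemma Hv_ex_indep_pair:
  assumes "(V, E) \<in> Hv r q" "q \<le> Suc r"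
  obtains I where "is_indep V E I" "card I = 2"
proof -
  from assms have "sgraph V E" and "r < card V" and "\<forall>K. is_clique V E K \<longrightarrow> card K < q"
    by (auto simp: mem_Hv_iff vertex_arrows_imp_less_card)
  with assms(2) have "\<not> is_clique V E V"
    by fastforce
  then obtain u w where "u \<in> V" "w \<in> V" "u \<noteq> w" "{u, w} \<notin> E"
    unfolding is_clique_def by blast
  then have "is_indep V E {u, w}" "card {u, w} = 2"
    by (auto simp: is_indep_def insert_commute)
  then show ?thesis
    using that by blast
qed

theorem corollary2p1:
  fixes q r :: nat
  assumes "4 \<le> q" and "q < r + 3"
  shows "Fv r (q - 1) \<ge> Fv r q + 1 \<and>
         (Fv r q + 1 \<ge> ramsey3 (q - 1) \<longrightarrow> Fv r (q - 1) \<ge> Fv r q + 2)"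
proof -
  have q: "Suc (q - 1) = q"
    using assms(1) by simp
  have "Hv r (q - 1) \<noteq> {}"
    using assms(1) by (intro Hv_nonempty) simp
  then obtain V E where G: "(V, E) \<in> Hv r (q - 1)" and card_V: "card V = Fv r (q - 1)"
    by (rule Fv_attained)
  from assms(2) have "q - 1 \<le> Suc r"
    by simp
  with G obtain I2 where "is_indep V E I2" "card I2 = 2"
    by (rule Hv_ex_indep_pair)
  with Fv_Suc_le_collapse[OF G, of I2] have part_a: "Fv r q + 1 \<le> card V"
    unfolding q by fastforce
  moreover have "Fv r q + 2 \<le> card V" if "ramsey3 (q - 1) \<le> Fv r q + 1"
  proof -
    from G have "sgraph V E" and "\<not> (\<exists>K. is_clique V E K \<and> card K = q - 1)"
      by (auto simp: mem_Hv_iff)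
    with ramsey3_le_card_imp_clique_or_indep[of V E "q - 1"] part_a that
    obtain I3 where "is_indep V E I3" "card I3 = 3"
      by fastforce
    with Fv_Suc_le_collapse[OF G, of I3] show ?thesis
      unfolding q by fastforce
  qed
  ultimately show ?thesis
    using card_V by simp
qed

end
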